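(* Let $G_1,G_2,G_3\in\mathrm{SL}_2(\mathbb C)$ and let $(H_1,H_2,H_3)$ be the image of $(G_1,G_2,G_3)$ under the braid $b=\sigma_1\sigma_2^{-1}\sigma_1\sigma_2^{-1}\sigma_1\in B_3$, where the generators act on triples by $\sigma_1:(G_1,G_2,G_3)\mapsto (G_2,G_2^{-1}G_1G_2,G_3)$, $\sigma_1^{-1}:(G_1,G_2,G_3)\mapsto(G_1G_2G_1^{-1},G_1,G_3)$, $\sigma_2:(G_1,G_2,G_3)\mapsto(G_1,G_3,G_3^{-1}G_2G_3)$, $\sigma_2^{-1}:(G_1,G_2,G_3)\mapsto(G_1,G_2G_3G_2^{-1},G_2)$ (so in particular $H_1H_2H_3=G_1G_2G_3$). Suppose $A\in\mathrm{SL}_2(\mathbb C)$ satisfies $H_1=AG_3^{-1}A^{-1}$, $H_2=AG_2^{-1}A^{-1}$, $H_3=AG_1^{-1}A^{-1}$. If $G_1G_2G_3\neq\pm I$, then $A^2=-I$. *)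

theory Defs
  imports "HOL-Analysis.Analysis"
begin

type_synonym mat2 = "complex^2^2"

definition SL2 :: "mat2 set" where
  "SL2 = {M. det M = 1}"

definition sig1 :: "mat2 \<times> mat2 \<times> mat2 \<Rightarrow> mat2 \<times> mat2 \<times> mat2" where
  "sig1 = (\<lambda>(G1, G2, G3). (G2, matrix_inv G2 ** G1 ** G2, G3))"

definition sig1_inv :: "mat2 \<times> mat2 \<times> mat2 \<Rightarrow> mat2 \<times> mat2 \<times> mat2" where
  "sig1_inv = (\<lambda>(G1, G2, G3). (G1 ** G2 ** matrix_inv G1, G1, G3))"

definition sig2 :: "mat2 \<times> mat2 \<times> mat2 \<Rightarrow> mat2 \<times> mat2 \<times> mat2" where
  "sig2 = (\<lambda>(G1, G2, G3). (G1, G3, matrix_inv G3 ** G2 ** G3))"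

definition sig2_inv :: "mat2 \<times> mat2 \<times> mat2 \<Rightarrow> mat2 \<times> mat2 \<times> mat2" where
  "sig2_inv = (\<lambda>(G1, G2, G3). (G1, G2 ** G3 ** matrix_inv G2, G2))"

text \<open>The braid b = sigma1 sigma2^-1 sigma1 sigma2^-1 sigma1 (a palindromic word,
  so the order of application convention is irrelevant).\<close>

definition braid_b :: "mat2 \<times> mat2 \<times> mat2 \<Rightarrow> mat2 \<times> mat2 \<times> mat2" where
  "braid_b = sig1 \<circ> sig2_inv \<circ> sig1 \<circ> sig2_inv \<circ> sig1"

end

theory Submission
  imports Defs
begin

(* Every braid generator preserves the product of a triple, so P = G1 G2 G3 equals
   H1 H2 H3 = A P^-1 A^-1: conjugation by A inverts P. For det P = 1 we have
   P^-1 = tr(P) I - P, hence PA + AP = tr(P) A, and comparing with the polarized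
   Cayley-Hamilton identity shows that tr(A) P is a scalar matrix. If tr A were
   nonzero, P would be a scalar matrix of determinant 1, i.e. P = I or P = -I. So tr A = 0, and
   Cayley-Hamilton A^2 = tr(A) A - I gives A^2 = -I. *)

lemma matrix_inv_right:
  "invertible A \<Longrightarrow> A ** matrix_inv A = mat 1"
  unfolding invertible_def matrix_inv_def by (rule someI2_ex) auto

lemma matrix_inv_left:
  "invertible A \<Longrightarrow> matrix_inv A ** A = mat 1"
  unfolding invertible_def matrix_inv_def by (rule someI2_ex) auto

lemma matrix_inv_unique:
  fixes A B :: "'a::semiring_1^'n^'n"
  assumes AB: "A ** B = mat 1" and BA: "B ** A = mat 1"
  shows "matrix_inv A = B"
proof -
  have "invertible A" using AB BA unfolding invertible_def by blast
  have "matrix_inv A = (B ** A) ** matrix_inv A" by (simp add: BA)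
  also have "\<dots> = B"
    by (simp add: matrix_inv_right[OF \<open>invertible A\<close>] flip: matrix_mul_assoc)
  finally show ?thesis .
qed

lemma invertible_matrix_inv: "invertible A \<Longrightarrow> invertible (matrix_inv A)"
  using matrix_inv_left matrix_inv_right unfolding invertible_def by blast

lemma matrix_inv_mult:
  fixes A B :: "'a::semiring_1^'n^'n"
  assumes "invertible A" "invertible B"
  shows "matrix_inv (A ** B) = matrix_inv B ** matrix_inv A"
proof (rule matrix_inv_unique)
  show "A ** B ** (matrix_inv B ** matrix_inv A) = mat 1"
    by (metis assms matrix_inv_right matrix_mul_assoc matrix_mul_rid)
  show "matrix_inv B ** matrix_inv A ** (A ** B) = mat 1"
    by (metis assms matrix_inv_left matrix_mul_assoc matrix_mul_rid)
qed

lemma matrix_conj_mult: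
  assumes "invertible A"
  shows "A ** X ** matrix_inv A ** (A ** Y ** matrix_inv A) = A ** (X ** Y) ** matrix_inv A"
  by (metis assms matrix_inv_left matrix_mul_assoc matrix_mul_rid)

lemma vec2_eq_iff: "(x::'a^2) = y \<longleftrightarrow> x$1 = y$1 \<and> x$2 = y$2"
  by (auto simp: vec_eq_iff forall_2)

lemma matrix_mult_2_nth:
  "((A::'a::semiring_1^2^2) ** B) $ i $ j = A$i$1 * B$1$j + A$i$2 * B$2$j"
  by (simp add: matrix_matrix_mult_def sum_2)

lemma trace_2: "trace (A::'a::semiring_1^2^2) = A$1$1 + A$2$2"
  by (simp add: trace_def sum_2)

lemmas matrix_2_simps = vec2_eq_iff matrix_mult_2_nth trace_2 det_2 mat_def

lemma cayley_hamilton_2: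
  fixes A :: "'a::comm_ring_1^2^2"
  shows "A ** A = mat (trace A) ** A - mat (det A)"
  by (simp add: matrix_2_simps algebra_simps)

lemma cayley_hamilton_2_polarized:
  fixes A B :: "'a::comm_ring_1^2^2"
  shows "A ** B + B ** A + mat (trace A * trace B - trace (A ** B)) =
    mat (trace A) ** B + mat (trace B) ** A"
  by (simp add: matrix_2_simps algebra_simps)

lemma mat_mult_eq_mat_iff:
  fixes A :: "'a::field^'n^'n"
  assumes "c \<noteq> 0"
  shows "mat c ** A = mat d \<longleftrightarrow> A = mat (d / c)"
proof -
  have "mat c ** A = (\<chi> i j. c * A $ i $ j)"
    by (simp add: vec_eq_iff matrix_matrix_mult_def mat_def if_distrib if_distribR cong: if_cong)
  then show ?thesis
    using assms by (auto simp: vec_eq_iff mat_def field_simps)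
qed

lemma matrix_inv_2_det_1:
  fixes A :: "'a::comm_ring_1^2^2"
  assumes "det A = 1"
  shows "matrix_inv A = mat (trace A) - A"
  by (rule matrix_inv_unique) (use assms in \<open>simp_all add: matrix_2_simps algebra_simps\<close>)

lemma scalar_matrix_2_det_1:
  fixes c :: "'a::idom"
  assumes "det (mat c :: 'a^2^2) = 1"
  shows "(mat c :: 'a^2^2) = mat 1 \<or> mat c = - mat 1"
proof -
  have "c\<^sup>2 = 1" using assms by (simp add: det_2 mat_def power2_eq_square)
  then have "c = 1 \<or> c = -1" by (simp add: power2_eq_1_iff)
  then show ?thesis by (auto simp: vec_eq_iff mat_def)
qed

lemma trace_eq_0_if_conj_inverse:
  fixes A P :: "'a::field^2^2"
  assumes "det P = 1" and conj: "P ** A = A ** matrix_inv P"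
    and "P \<noteq> mat 1" and "P \<noteq> - mat 1"
  shows "trace A = 0"
proof (rule ccontr)
  assume "trace A \<noteq> 0"
  have "P ** A + A ** P = mat (trace P) ** A"
    using conj by (simp add: matrix_inv_2_det_1[OF \<open>det P = 1\<close>] matrix_2_simps algebra_simps)
  with cayley_hamilton_2_polarized[of P A]
  have "mat (trace A) ** P = mat (trace P * trace A - trace (P ** A))"
    by simp
  then have "P = mat ((trace P * trace A - trace (P ** A)) / trace A)"
    using \<open>trace A \<noteq> 0\<close> by (simp add: mat_mult_eq_mat_iff)
  then show False
    using scalar_matrix_2_det_1 assms by metis
qed

lemma square_eq_minus_1_if_trace_0:
  fixes A :: "'a::comm_ring_1^2^2"
  assumes "trace A = 0" and "det A = 1"
  shows "A ** A = - mat 1"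
  using cayley_hamilton_2[of A] assms by simp

definition GL2 :: "mat2 set" where
  "GL2 = {M. invertible M}"

definition triple_prod :: "mat2 \<times> mat2 \<times> mat2 \<Rightarrow> mat2" where
  "triple_prod = (\<lambda>(G1, G2, G3). G1 ** G2 ** G3)"

lemma sig1_GL2: "t \<in> GL2 \<times> GL2 \<times> GL2 \<Longrightarrow> sig1 t \<in> GL2 \<times> GL2 \<times> GL2"
  by (auto simp: sig1_def GL2_def invertible_mult invertible_matrix_inv)

lemma sig2_inv_GL2: "t \<in> GL2 \<times> GL2 \<times> GL2 \<Longrightarrow> sig2_inv t \<in> GL2 \<times> GL2 \<times> GL2"
  by (auto simp: sig2_inv_def GL2_def invertible_mult invertible_matrix_inv)

lemma triple_prod_sig1:
  "t \<in> GL2 \<times> GL2 \<times> GL2 \<Longrightarrow> triple_prod (sig1 t) = triple_prod t"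
  by (auto simp: sig1_def triple_prod_def GL2_def matrix_inv_right matrix_mul_assoc)

lemma triple_prod_sig2_inv:
  "t \<in> GL2 \<times> GL2 \<times> GL2 \<Longrightarrow> triple_prod (sig2_inv t) = triple_prod t"
  by (auto simp: sig2_inv_def triple_prod_def GL2_def matrix_inv_left simp flip: matrix_mul_assoc)

lemma triple_prod_braid_b:
  "t \<in> GL2 \<times> GL2 \<times> GL2 \<Longrightarrow> triple_prod (braid_b t) = triple_prod t"
  by (simp add: braid_b_def sig1_GL2 sig2_inv_GL2 triple_prod_sig1 triple_prod_sig2_inv)

theorem lemma3p2:
  fixes G1 G2 G3 H1 H2 H3 A :: mat2
  assumes "G1 \<in> SL2" and "G2 \<in> SL2" and "G3 \<in> SL2" and "A \<in> SL2"
    and "braid_b (G1, G2, G3) = (H1, H2, H3)"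
    and "H1 = A ** matrix_inv G3 ** matrix_inv A"
    and "H2 = A ** matrix_inv G2 ** matrix_inv A"
    and "H3 = A ** matrix_inv G1 ** matrix_inv A"
    and "G1 ** G2 ** G3 \<noteq> mat 1" and "G1 ** G2 ** G3 \<noteq> - mat 1"
  shows "A ** A = - mat 1"
proof -
  define P where "P = G1 ** G2 ** G3"
  have det: "det G1 = 1" "det G2 = 1" "det G3 = 1" "det A = 1"
    using assms(1-4) by (simp_all add: SL2_def)
  then have inv: "invertible G1" "invertible G2" "invertible G3" "invertible A"
    by (simp_all add: invertible_det_nz)
  have "P = triple_prod (braid_b (G1, G2, G3))"
    using triple_prod_braid_b[of "(G1, G2, G3)"] inv by (simp add: GL2_def triple_prod_def P_def)
  also have "\<dots> = A ** (matrix_inv G3 ** matrix_inv G2 ** matrix_inv G1) ** matrix_inv A"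
    using assms(5-8) by (simp add: triple_prod_def matrix_conj_mult inv)
  also have "\<dots> = A ** matrix_inv P ** matrix_inv A"
    by (simp add: P_def matrix_inv_mult invertible_mult inv matrix_mul_assoc)
  finally have "P ** A = A ** matrix_inv P ** (matrix_inv A ** A)"
    by (simp add: matrix_mul_assoc)
  then have "P ** A = A ** matrix_inv P"
    by (simp add: matrix_inv_left inv)
  moreover have "det P = 1"
    using det by (simp add: P_def det_mul)
  ultimately have "trace A = 0"
    using trace_eq_0_if_conj_inverse assms(9,10) P_def by blast
  then show ?thesis
    using square_eq_minus_1_if_trace_0 det(4) by blast
qed

end
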